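(* Let $f:\{0,1\}^n\to\mathbb{R}$ have M\"obius expansion $f(\mathbf x)=\sum_{\mathbf k\le \mathbf x}F(\mathbf k)$. Let $\mathbf H\in\{0,1\}^{n\times t}$ and $\boldsymbol\ell\in\{0,1\}^t$, and define the query vector $\mathbf x=\neg(\mathbf H\cdot\neg\boldsymbol\ell)\in\{0,1\}^n$. Then $$f(\mathbf x)=\sum_{\mathbf k\in\{0,1\}^n:\ \mathbf H^\top\mathbf k\le \boldsymbol\ell}F(\mathbf k),$$ where the products $\mathbf H\cdot\neg\boldsymbol\ell$ and $\mathbf H^\top\mathbf k$ are computed over the Boolean semiring and $\le$ is componentwise.
   Context: Every function $f:\{0,1\}^n\to\mathbb{R}$ can be written uniquely as $f(\mathbf x)=\sum_{\mathbf k\in\{0,1\}^n,\ \mathbf k\le\mathbf x}F(\mathbf k)$ (real addition), where $\mathbf k\le\mathbf x$ means $k_i\le x_i$ for all $i$; the real numbers $F(\mathbf k)$ are the M\"obius coefficients of $f$. All operations between Boolean entries are over the Boolean semiring $(\{0,1\},\vee,\wedge)$: addition is logical OR and multiplication is logical AND, so e.g. $(\mathbf H^\top\mathbf k)_j=\bigvee_i H_{ij}\wedge k_i$. $\neg\mathbf a$ denotes bitwise negation of a binary vector $\mathbf a$. *)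

theory Defs
  imports Complex_Main
begin

text \<open>Binary vectors in {0,1}^n are modelled as functions from a finite index
type to bool (True = 1).\<close>

definition bvec_le :: "('i \<Rightarrow> bool) \<Rightarrow> ('i \<Rightarrow> bool) \<Rightarrow> bool" where
  "bvec_le a b \<longleftrightarrow> (\<forall>i. a i \<longrightarrow> b i)"

definition bmat_vec :: "('n \<Rightarrow> 't \<Rightarrow> bool) \<Rightarrow> ('t \<Rightarrow> bool) \<Rightarrow> ('n \<Rightarrow> bool)" where
  "bmat_vec H v = (\<lambda>i. \<exists>j. H i j \<and> v j)"

definition bmatT_vec :: "('n \<Rightarrow> 't \<Rightarrow> bool) \<Rightarrow> ('n \<Rightarrow> bool) \<Rightarrow> ('t \<Rightarrow> bool)" where
  "bmatT_vec H k = (\<lambda>j. \<exists>i. H i j \<and> k i)"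

definition bneg :: "('i \<Rightarrow> bool) \<Rightarrow> ('i \<Rightarrow> bool)" where
  "bneg a = (\<lambda>i. \<not> a i)"

end

theory Submission
  imports Defs
begin

text \<open>The Galois connection between the Boolean products with H and with H^T.\<close>
lemma bvec_le_bneg_bmat_vec_bneg_iff:
  "bvec_le k (bneg (bmat_vec H (bneg l))) \<longleftrightarrow> bvec_le (bmatT_vec H k) l"
  unfolding bvec_le_def bneg_def bmat_vec_def bmatT_vec_def by blast

theorem lemma1:
  fixes f F :: "('n::finite \<Rightarrow> bool) \<Rightarrow> real"
    and H :: "'n \<Rightarrow> 't::finite \<Rightarrow> bool"
    and l :: "'t \<Rightarrow> bool"
  assumes moebius: "\<And>x. f x = (\<Sum>k\<in>{k. bvec_le k x}. F k)"
  shows "f (bneg (bmat_vec H (bneg l))) = (\<Sum>k\<in>{k. bvec_le (bmatT_vec H k) l}. F k)"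
  by (simp add: moebius bvec_le_bneg_bmat_vec_bneg_iff)

end
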